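(* Let $V$ be a finite-dimensional super vector space over a field of characteristic $0$ and let $\omega:V\times V\to V$ be a bilinear map with $\omega(V_\alpha,V_\beta)\subseteq V_{\alpha+\beta}$. For $x\in V$ let $\mathrm{ad}_\omega(x)\in\mathfrak{gl}(V)$ be $\mathrm{ad}_\omega(x)(y)=\omega(x,y)$, and let $\mathcal{F}_\omega=\{\mathrm{ad}_\omega(x)+x: x\in V\}\subseteq\mathcal{E}=\mathfrak{gl}(V)\oplus V$. Then $(V,\omega)$ is a Lie superalgebra (with bracket $[x,y]=\omega(x,y)$) if and only if $\mathcal{F}_\omega=\mathcal{F}_\omega^{\perp}$ and $\mathcal{F}_\omega$ is closed under the bracket $[\![\cdot,\cdot]\!]$.
   Context: $\mathfrak{gl}(V)$: linear endomorphisms of $V$ with natural $\mathbb{Z}_2$-grading and supercommutator $[A,B]=AB-(-1)^{|A||B|}BA$. $\mathcal{E}=\mathfrak{gl}(V)\oplus V$ graded by $\mathcal{E}_\alpha=\mathfrak{gl}(V)_\alpha\oplus V_\alpha$, homogeneous elements $A+x$ with $|A|=|x|$. Bracket: $[\![A+x,B+y]\!]=[A,B]+\tfrac12(Ay-(-1)^{|x||y|}Bx)$; $V$-valued pairing: $\langle A+x,B+y\rangle=\tfrac12(Ay+(-1)^{|x||y|}Bx)$ (both extended bilinearly). For a subspace $F\subseteq\mathcal{E}$, $F^\perp=\{e\in\mathcal{E}:\langle e,f\rangle=0\ \forall f\in F\}$. A Lie superalgebra is a super vector space $L$ with bilinear bracket satisfying $[L_\alpha,L_\beta]\subseteq L_{\alpha+\beta}$,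 super skew-symmetry $[x,y]=-(-1)^{|x||y|}[y,x]$, and the super Jacobi identity $[x,[y,z]]=[[x,y],z]+(-1)^{|x||y|}[y,[x,z]]$ for homogeneous $x,y,z$. *)

theory Defs
  imports Complex_Main
begin

text \<open>The parity group Z2 is modelled by bool (False = even, True = odd);
  addition in Z2 is inequality (xor).\<close>

definition zadd :: "bool \<Rightarrow> bool \<Rightarrow> bool" where
  "zadd a b = (a \<noteq> b)"

definition sgnsc :: "('k::field \<Rightarrow> 'v \<Rightarrow> 'v) \<Rightarrow> bool \<Rightarrow> bool \<Rightarrow> 'v \<Rightarrow> 'v" where
  "sgnsc sc a b v = sc (if a \<and> b then -1 else 1) v"

definition fd_super_vector_space ::
  "('k::field \<Rightarrow> 'v::ab_group_add \<Rightarrow> 'v) \<Rightarrow> (bool \<Rightarrow> 'v set) \<Rightarrow> bool" where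
  "fd_super_vector_space sc G \<longleftrightarrow>
     vector_space sc \<and> (\<exists>B. finite_dimensional_vector_space sc B) \<and>
     Modules.module.subspace sc (G False) \<and> Modules.module.subspace sc (G True) \<and>
     G False \<inter> G True = {0} \<and>
     (\<forall>x. \<exists>u\<in>G False. \<exists>w\<in>G True. x = u + w)"

definition proj :: "(bool \<Rightarrow> 'v::ab_group_add set) \<Rightarrow> bool \<Rightarrow> 'v \<Rightarrow> 'v" where
  "proj G a x = (THE y. y \<in> G a \<and> x - y \<in> G (\<not> a))"

definition gl :: "('k::field \<Rightarrow> 'v::ab_group_add \<Rightarrow> 'v) \<Rightarrow> ('v \<Rightarrow> 'v) set" where
  "gl sc = {A. Vector_Spaces.linear sc sc A}"

definition glcomp :: "(bool \<Rightarrow> 'v::ab_group_add set) \<Rightarrow> bool \<Rightarrow> ('v \<Rightarrow> 'v) \<Rightarrow> ('v \<Rightarrow> 'v)" where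
  "glcomp G a A = (\<lambda>v. proj G (zadd a False) (A (proj G False v))
                     + proj G (zadd a True) (A (proj G True v)))"

definition scomm :: "('k::field \<Rightarrow> 'v::ab_group_add \<Rightarrow> 'v) \<Rightarrow> bool \<Rightarrow> bool \<Rightarrow>
    ('v \<Rightarrow> 'v) \<Rightarrow> ('v \<Rightarrow> 'v) \<Rightarrow> ('v \<Rightarrow> 'v)" where
  "scomm sc a b A B = (\<lambda>v. A (B v) - sgnsc sc a b (B (A v)))"

text \<open>The space E = gl(V) \<oplus> V, elements are pairs (A, x) standing for A + x.\<close>
definition Esp :: "('k::field \<Rightarrow> 'v::ab_group_add \<Rightarrow> 'v) \<Rightarrow> (('v \<Rightarrow> 'v) \<times> 'v) set" where
  "Esp sc = gl sc \<times> UNIV"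

definition Ecomp :: "(bool \<Rightarrow> 'v::ab_group_add set) \<Rightarrow> bool \<Rightarrow> ('v \<Rightarrow> 'v) \<times> 'v \<Rightarrow> ('v \<Rightarrow> 'v) \<times> 'v" where
  "Ecomp G a e = (glcomp G a (fst e), proj G a (snd e))"

definition hbr :: "('k::field_char_0 \<Rightarrow> 'v::ab_group_add \<Rightarrow> 'v) \<Rightarrow> bool \<Rightarrow> bool \<Rightarrow>
    ('v \<Rightarrow> 'v) \<times> 'v \<Rightarrow> ('v \<Rightarrow> 'v) \<times> 'v \<Rightarrow> ('v \<Rightarrow> 'v) \<times> 'v" where
  "hbr sc a b e f = (scomm sc a b (fst e) (fst f),
      sc (inverse 2) (fst e (snd f) - sgnsc sc a b (fst f (snd e))))"

definition hpair :: "('k::field_char_0 \<Rightarrow> 'v::ab_group_add \<Rightarrow> 'v) \<Rightarrow> bool \<Rightarrow> bool \<Rightarrow>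
    ('v \<Rightarrow> 'v) \<times> 'v \<Rightarrow> ('v \<Rightarrow> 'v) \<times> 'v \<Rightarrow> 'v" where
  "hpair sc a b e f = sc (inverse 2) (fst e (snd f) + sgnsc sc a b (fst f (snd e)))"

definition Ebr :: "('k::field_char_0 \<Rightarrow> 'v::ab_group_add \<Rightarrow> 'v) \<Rightarrow> (bool \<Rightarrow> 'v set) \<Rightarrow>
    ('v \<Rightarrow> 'v) \<times> 'v \<Rightarrow> ('v \<Rightarrow> 'v) \<times> 'v \<Rightarrow> ('v \<Rightarrow> 'v) \<times> 'v" where
  "Ebr sc G e f =
     (let r = (\<lambda>a b. hbr sc a b (Ecomp G a e) (Ecomp G b f)) in
      ((\<lambda>v. (\<Sum>a\<in>UNIV. \<Sum>b\<in>UNIV. fst (r a b) v)), (\<Sum>a\<in>UNIV. \<Sum>b\<in>UNIV. snd (r a b))))"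

definition Epair :: "('k::field_char_0 \<Rightarrow> 'v::ab_group_add \<Rightarrow> 'v) \<Rightarrow> (bool \<Rightarrow> 'v set) \<Rightarrow>
    ('v \<Rightarrow> 'v) \<times> 'v \<Rightarrow> ('v \<Rightarrow> 'v) \<times> 'v \<Rightarrow> 'v" where
  "Epair sc G e f = (\<Sum>a\<in>UNIV. \<Sum>b\<in>UNIV. hpair sc a b (Ecomp G a e) (Ecomp G b f))"

definition Eperp :: "('k::field_char_0 \<Rightarrow> 'v::ab_group_add \<Rightarrow> 'v) \<Rightarrow> (bool \<Rightarrow> 'v set) \<Rightarrow>
    (('v \<Rightarrow> 'v) \<times> 'v) set \<Rightarrow> (('v \<Rightarrow> 'v) \<times> 'v) set" where
  "Eperp sc G F = {e \<in> Esp sc. \<forall>f\<in>F. Epair sc G e f = 0}"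

definition ad :: "('v \<Rightarrow> 'v \<Rightarrow> 'v) \<Rightarrow> 'v \<Rightarrow> ('v \<Rightarrow> 'v)" where
  "ad \<omega> x = (\<lambda>y. \<omega> x y)"

definition Fom :: "('v \<Rightarrow> 'v \<Rightarrow> 'v) \<Rightarrow> (('v \<Rightarrow> 'v) \<times> 'v) set" where
  "Fom \<omega> = {(ad \<omega> x, x) | x. True}"

definition bilinear_map :: "('k::field \<Rightarrow> 'v::ab_group_add \<Rightarrow> 'v) \<Rightarrow> ('v \<Rightarrow> 'v \<Rightarrow> 'v) \<Rightarrow> bool" where
  "bilinear_map sc \<omega> \<longleftrightarrow> (\<forall>x. Vector_Spaces.linear sc sc (\<omega> x)) \<and>
                          (\<forall>y. Vector_Spaces.linear sc sc (\<lambda>x. \<omega> x y))"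

definition graded_map :: "(bool \<Rightarrow> 'v set) \<Rightarrow> ('v \<Rightarrow> 'v \<Rightarrow> 'v) \<Rightarrow> bool" where
  "graded_map G \<omega> \<longleftrightarrow> (\<forall>a b x y. x \<in> G a \<longrightarrow> y \<in> G b \<longrightarrow> \<omega> x y \<in> G (zadd a b))"

definition lie_superalgebra ::
  "('k::field \<Rightarrow> 'v::ab_group_add \<Rightarrow> 'v) \<Rightarrow> (bool \<Rightarrow> 'v set) \<Rightarrow> ('v \<Rightarrow> 'v \<Rightarrow> 'v) \<Rightarrow> bool" where
  "lie_superalgebra sc G br \<longleftrightarrow>
     bilinear_map sc br \<and> graded_map G br \<and>
     (\<forall>a b x y. x \<in> G a \<longrightarrow> y \<in> G b \<longrightarrow> br x y = - sgnsc sc a b (br y x)) \<and>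
     (\<forall>a b c x y z. x \<in> G a \<longrightarrow> y \<in> G b \<longrightarrow> z \<in> G c \<longrightarrow>
        br x (br y z) = br (br x y) z + sgnsc sc a b (br y (br x z)))"

end

theory Submission
  imports Defs
begin

(* For homogeneous x, y the pairing of ad x + x with ad y + y is
   1/2 (\<omega>(x,y) + (-1)^(|x||y|) \<omega>(y,x)), so F_\<omega> is isotropic exactly when \<omega> is super
   skew-symmetric. For skew \<omega> the pairing of an arbitrary A + z with ad y + y collapses
   to 1/2 (A y - \<omega>(z,y)), hence F_\<omega>^perp is contained in F_\<omega> and F_\<omega> is Lagrangian.
   For skew \<omega> the bracket of ad x + x and ad y + y is ([ad x, ad y], \<omega>(x,y)); it lies in
   F_\<omega> iff [ad x, ad y] = ad \<omega>(x,y), which is the super Jacobi identity. *)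

definition super_skew_symmetric ::
  "('k::field \<Rightarrow> 'v::ab_group_add \<Rightarrow> 'v) \<Rightarrow> (bool \<Rightarrow> 'v set) \<Rightarrow> ('v \<Rightarrow> 'v \<Rightarrow> 'v) \<Rightarrow> bool" where
  "super_skew_symmetric sc G br \<longleftrightarrow>
     (\<forall>a b x y. x \<in> G a \<longrightarrow> y \<in> G b \<longrightarrow> br x y = - sgnsc sc a b (br y x))"

definition super_Jacobi ::
  "('k::field \<Rightarrow> 'v::ab_group_add \<Rightarrow> 'v) \<Rightarrow> (bool \<Rightarrow> 'v set) \<Rightarrow> ('v \<Rightarrow> 'v \<Rightarrow> 'v) \<Rightarrow> bool" where
  "super_Jacobi sc G br \<longleftrightarrow>
     (\<forall>a b c x y z. x \<in> G a \<longrightarrow> y \<in> G b \<longrightarrow> z \<in> G c \<longrightarrow>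
        br x (br y z) = br (br x y) z + sgnsc sc a b (br y (br x z)))"

lemma lie_superalgebra_iff:
  "lie_superalgebra sc G br \<longleftrightarrow>
     bilinear_map sc br \<and> graded_map G br \<and> super_skew_symmetric sc G br \<and> super_Jacobi sc G br"
  unfolding lie_superalgebra_def super_skew_symmetric_def super_Jacobi_def ..

lemma sum_UNIV_bool: "(\<Sum>a\<in>(UNIV::bool set). f a) = f False + f True"
  by (simp add: UNIV_bool add.commute)

locale super_vector_space =
  fixes sc :: "'k::field_char_0 \<Rightarrow> 'v::ab_group_add \<Rightarrow> 'v" and G :: "bool \<Rightarrow> 'v set"
  assumes fd_super_vector_space: "fd_super_vector_space sc G"
begin

sublocale V: vector_space sc
  using fd_super_vector_space by (simp add: fd_super_vector_space_def)

lemma subspace_G: "V.subspace (G a)"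
  using fd_super_vector_space by (cases a) (auto simp: fd_super_vector_space_def)

lemma G_inter_eq_0: "x \<in> G a \<Longrightarrow> x \<in> G (\<not> a) \<Longrightarrow> x = 0"
  using fd_super_vector_space by (cases a) (auto simp: fd_super_vector_space_def)

lemma proj_unique:
  assumes "y \<in> G a" "x - y \<in> G (\<not> a)"
  shows "proj G a x = y"
  unfolding proj_def
proof (rule the_equality)
  fix y' assume y': "y' \<in> G a \<and> x - y' \<in> G (\<not> a)"
  have "y' - y \<in> G a" "y' - y \<in> G (\<not> a)"
    using V.subspace_diff[OF subspace_G, of y' a y] V.subspace_diff[OF subspace_G, of "x - y" "\<not> a" "x - y'"]
      assms y' by (simp_all add: algebra_simps)
  then show "y' = y" using G_inter_eq_0 by force
qed (use assms in simp)

lemma proj_in: "proj G a x \<in> G a" and diff_proj_in: "x - proj G a x \<in> G (\<not> a)"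
proof -
  obtain u w where "u \<in> G False" "w \<in> G True" "x = u + w"
    using fd_super_vector_space unfolding fd_super_vector_space_def by blast
  then have "proj G a x = (if a then w else u)"
    by (cases a) (auto intro: proj_unique)
  then show "proj G a x \<in> G a" "x - proj G a x \<in> G (\<not> a)"
    using \<open>u \<in> G False\<close> \<open>w \<in> G True\<close> \<open>x = u + w\<close> by auto
qed

lemma proj_False_add_proj_True: "proj G False x + proj G True x = x"
proof -
  have "proj G True x = x - proj G False x"
    using diff_proj_in[of x False] proj_in[of False x] by (intro proj_unique) simp_all
  then show ?thesis by simp
qed

lemma proj_homogeneous: "x \<in> G a \<Longrightarrow> proj G c x = (if c = a then x else 0)"
  using V.subspace_0[OF subspace_G] by (cases a; cases c) (auto intro!: proj_unique)

lemma sgnsc_eq: "sgnsc sc a b v = (if a \<and> b then - v else v)"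
  by (simp add: sgnsc_def)

lemma scale_half_double: "sc (inverse 2) (v + v) = v"
proof -
  have "sc (inverse 2) (v + v) = sc (inverse 2 + inverse 2) v"
    by (simp only: V.scale_left_distrib V.scale_right_distrib)
  also have "inverse 2 + inverse 2 = (1::'k)" by simp
  finally show ?thesis by simp
qed

lemma scale_half_eq_0_iff: "sc (inverse 2) v = 0 \<longleftrightarrow> v = 0"
  using scale_half_double[of v] by (auto simp: V.scale_right_distrib)

lemma sum_glcomp:
  assumes "Vector_Spaces.linear sc sc A"
  shows "(\<Sum>a\<in>UNIV. glcomp G a A v) = A v"
proof -
  interpret A: module_hom sc sc A using assms by (simp add: linear_iff_module_hom)
  have "(\<Sum>a\<in>UNIV. glcomp G a A v) =
      (proj G False (A (proj G False v)) + proj G True (A (proj G False v)))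
      + (proj G False (A (proj G True v)) + proj G True (A (proj G True v)))"
    by (simp add: sum_UNIV_bool glcomp_def zadd_def ac_simps)
  also have "\<dots> = A (proj G False v) + A (proj G True v)"
    by (simp only: proj_False_add_proj_True)
  also have "\<dots> = A v" by (simp flip: A.add add: proj_False_add_proj_True)
  finally show ?thesis .
qed

end

locale graded_bilinear = super_vector_space sc G
  for sc :: "'k::field_char_0 \<Rightarrow> 'v::ab_group_add \<Rightarrow> 'v" and G +
  fixes \<omega> :: "'v \<Rightarrow> 'v \<Rightarrow> 'v"
  assumes bilinear: "bilinear_map sc \<omega>" and graded: "graded_map G \<omega>"
begin

sublocale L: module_hom sc sc "\<lambda>x. \<omega> x y" for y
  using bilinear by (simp add: bilinear_map_def linear_iff_module_hom)

sublocale R: module_hom sc sc "\<omega> x" for x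
  using bilinear by (simp add: bilinear_map_def linear_iff_module_hom)

lemma omega_homogeneous: "x \<in> G a \<Longrightarrow> y \<in> G b \<Longrightarrow> \<omega> x y \<in> G (a \<noteq> b)"
  using graded by (auto simp: graded_map_def zadd_def)

lemma omega_proj_sum: "(\<Sum>a\<in>UNIV. \<Sum>b\<in>UNIV. \<omega> (proj G a x) (proj G b y)) = \<omega> x y"
  by (simp add: sum_UNIV_bool flip: L.add R.add add: proj_False_add_proj_True)

lemma glcomp_ad: "glcomp G a (ad \<omega> x) = ad \<omega> (proj G a x)"
proof
  fix v
  have "proj G (zadd a c) (\<omega> x w) = \<omega> (proj G a x) w" if "w \<in> G c" for c w
  proof (rule proj_unique)
    have "\<omega> x w - \<omega> (proj G a x) w = \<omega> (x - proj G a x) w" by (simp add: L.diff)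
    then show "\<omega> x w - \<omega> (proj G a x) w \<in> G (\<not> zadd a c)"
      using omega_homogeneous[OF diff_proj_in that] by (simp add: zadd_def)
  qed (use omega_homogeneous[OF proj_in that] in \<open>simp add: zadd_def\<close>)
  then have "glcomp G a (ad \<omega> x) v = \<omega> (proj G a x) (proj G False v) + \<omega> (proj G a x) (proj G True v)"
    by (simp add: glcomp_def ad_def proj_in)
  also have "\<dots> = ad \<omega> (proj G a x) v" by (simp add: ad_def flip: R.add add: proj_False_add_proj_True)
  finally show "glcomp G a (ad \<omega> x) v = ad \<omega> (proj G a x) v" .
qed

lemma Epair_Fom_right:
  "Epair sc G (A, z) (ad \<omega> y, y) =
     (\<Sum>a\<in>UNIV. \<Sum>b\<in>UNIV. sc (inverse 2)
        (glcomp G a A (proj G b y) + sgnsc sc a b (\<omega> (proj G b y) (proj G a z))))"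
  by (simp add: Epair_def hpair_def Ecomp_def glcomp_ad[unfolded ad_def] ad_def)

lemma Ebr_Fom:
  "Ebr sc G (ad \<omega> x, x) (ad \<omega> y, y) =
     ((\<lambda>v. \<Sum>a\<in>UNIV. \<Sum>b\<in>UNIV. \<omega> (proj G a x) (\<omega> (proj G b y) v)
                        - sgnsc sc a b (\<omega> (proj G b y) (\<omega> (proj G a x) v))),
      (\<Sum>a\<in>UNIV. \<Sum>b\<in>UNIV. sc (inverse 2)
         (\<omega> (proj G a x) (proj G b y) - sgnsc sc a b (\<omega> (proj G b y) (proj G a x)))))"
  by (simp add: Ebr_def hbr_def scomm_def Ecomp_def ad_def glcomp_ad[unfolded ad_def])

lemma Epair_Fom_homogeneous:
  assumes "x \<in> G a" "y \<in> G b"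
  shows "Epair sc G (ad \<omega> x, x) (ad \<omega> y, y) = sc (inverse 2) (\<omega> x y + sgnsc sc a b (\<omega> y x))"
  using assms unfolding Epair_Fom_right glcomp_ad
  by (cases a; cases b) (simp_all add: sum_UNIV_bool proj_homogeneous sgnsc_eq ad_def)

lemma Ebr_Fom_homogeneous:
  assumes "x \<in> G a" "y \<in> G b"
  shows "Ebr sc G (ad \<omega> x, x) (ad \<omega> y, y) =
           ((\<lambda>v. \<omega> x (\<omega> y v) - sgnsc sc a b (\<omega> y (\<omega> x v))),
            sc (inverse 2) (\<omega> x y - sgnsc sc a b (\<omega> y x)))"
  using assms by (cases a; cases b) (simp_all add: Ebr_Fom sum_UNIV_bool proj_homogeneous sgnsc_eq)

lemma Fom_subset_Esp: "Fom \<omega> \<subseteq> Esp sc"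
  using bilinear by (auto simp: Fom_def Esp_def gl_def ad_def bilinear_map_def)

lemma super_skew_symmetric_if_Fom_isotropic:
  assumes "Fom \<omega> \<subseteq> Eperp sc G (Fom \<omega>)"
  shows "super_skew_symmetric sc G \<omega>"
  unfolding super_skew_symmetric_def
proof (intro allI impI)
  fix a b x y assume hom: "x \<in> G a" "y \<in> G b"
  have "(ad \<omega> x, x) \<in> Eperp sc G (Fom \<omega>)" "(ad \<omega> y, y) \<in> Fom \<omega>"
    using assms by (auto simp: Fom_def)
  then have "Epair sc G (ad \<omega> x, x) (ad \<omega> y, y) = 0" by (simp add: Eperp_def)
  then have "sc (inverse 2) (\<omega> x y + sgnsc sc a b (\<omega> y x)) = 0"
    by (simp only: Epair_Fom_homogeneous[OF hom])
  then show "\<omega> x y = - sgnsc sc a b (\<omega> y x)"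
    by (simp add: scale_half_eq_0_iff eq_neg_iff_add_eq_0)
qed

context
  assumes skew: "super_skew_symmetric sc G \<omega>"
begin

lemma sgnsc_swap: "x \<in> G a \<Longrightarrow> y \<in> G b \<Longrightarrow> sgnsc sc a b (\<omega> y x) = - \<omega> x y"
  using skew unfolding super_skew_symmetric_def by (metis minus_minus sgnsc_eq)

lemma Epair_Fom_right_skew:
  assumes "Vector_Spaces.linear sc sc A"
  shows "Epair sc G (A, z) (ad \<omega> y, y) = sc (inverse 2) (A y - \<omega> z y)"
proof -
  interpret A: module_hom sc sc A using assms by (simp add: linear_iff_module_hom)
  have "Epair sc G (A, z) (ad \<omega> y, y) =
      (\<Sum>a\<in>UNIV. \<Sum>b\<in>UNIV. sc (inverse 2) (glcomp G a A (proj G b y) - \<omega> (proj G a z) (proj G b y)))"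
    by (simp add: Epair_Fom_right sgnsc_swap[OF proj_in proj_in])
  also have "\<dots> = sc (inverse 2) ((\<Sum>a\<in>UNIV. \<Sum>b\<in>UNIV. glcomp G a A (proj G b y))
                       - (\<Sum>a\<in>UNIV. \<Sum>b\<in>UNIV. \<omega> (proj G a z) (proj G b y)))"
    by (simp only: V.scale_sum_right V.scale_right_diff_distrib sum_subtractf)
  also have "(\<Sum>a\<in>UNIV. \<Sum>b\<in>UNIV. glcomp G a A (proj G b y)) = A y"
    unfolding sum.swap[of _ UNIV UNIV] sum_glcomp[OF assms]
    by (simp add: sum_UNIV_bool flip: A.add add: proj_False_add_proj_True)
  also note omega_proj_sum
  finally show ?thesis .
qed

lemma Fom_isotropic: "Fom \<omega> \<subseteq> Eperp sc G (Fom \<omega>)"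
proof -
  have "Epair sc G (ad \<omega> x, x) (ad \<omega> y, y) = 0" for x y
  proof -
    have "Vector_Spaces.linear sc sc (ad \<omega> x)" using bilinear by (simp add: bilinear_map_def ad_def)
    from Epair_Fom_right_skew[OF this] show ?thesis by (simp add: ad_def)
  qed
  then show ?thesis using Fom_subset_Esp by (auto simp: Eperp_def Fom_def)
qed

lemma Eperp_Fom_subset: "Eperp sc G (Fom \<omega>) \<subseteq> Fom \<omega>"
proof
  fix e assume e: "e \<in> Eperp sc G (Fom \<omega>)"
  obtain A z where ez: "e = (A, z)" by fastforce
  have A: "Vector_Spaces.linear sc sc A" using e ez by (simp add: Eperp_def Esp_def gl_def)
  have "sc (inverse 2) (A y - \<omega> z y) = 0" for y
  proof -
    have "Epair sc G (A, z) (ad \<omega> y, y) = 0" using e ez by (auto simp: Eperp_def Fom_def)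
    then show ?thesis by (simp only: Epair_Fom_right_skew[OF A])
  qed
  then have "A = ad \<omega> z" by (auto simp: scale_half_eq_0_iff ad_def)
  then show "e \<in> Fom \<omega>" using ez by (auto simp: Fom_def)
qed

end

lemma Fom_eq_Eperp_iff: "Fom \<omega> = Eperp sc G (Fom \<omega>) \<longleftrightarrow> super_skew_symmetric sc G \<omega>"
  using super_skew_symmetric_if_Fom_isotropic Fom_isotropic Eperp_Fom_subset by blast

lemma super_Jacobi_apply:
  assumes "super_Jacobi sc G \<omega>" "x \<in> G a" "y \<in> G b"
  shows "\<omega> x (\<omega> y v) - sgnsc sc a b (\<omega> y (\<omega> x v)) = \<omega> (\<omega> x y) v"
proof -
  have hom: "\<omega> x (\<omega> y w) - sgnsc sc a b (\<omega> y (\<omega> x w)) = \<omega> (\<omega> x y) w" if "w \<in> G c" for c w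
  proof -
    have "\<omega> x (\<omega> y w) = \<omega> (\<omega> x y) w + sgnsc sc a b (\<omega> y (\<omega> x w))"
      using assms that unfolding super_Jacobi_def by blast
    then show ?thesis by (simp add: algebra_simps)
  qed
  have additive: "\<omega> x (\<omega> y (p + q)) - sgnsc sc a b (\<omega> y (\<omega> x (p + q)))
      = (\<omega> x (\<omega> y p) - sgnsc sc a b (\<omega> y (\<omega> x p))) + (\<omega> x (\<omega> y q) - sgnsc sc a b (\<omega> y (\<omega> x q)))"
    for p q by (simp add: R.add sgnsc_eq)
  have "\<omega> x (\<omega> y v) - sgnsc sc a b (\<omega> y (\<omega> x v))
      = \<omega> (\<omega> x y) (proj G False v) + \<omega> (\<omega> x y) (proj G True v)"
    using additive[of "proj G False v" "proj G True v"]
    by (simp only: proj_False_add_proj_True hom[OF proj_in])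
  then show ?thesis by (simp flip: R.add add: proj_False_add_proj_True)
qed

lemma Ebr_Fom_eq:
  assumes "super_skew_symmetric sc G \<omega>" "super_Jacobi sc G \<omega>"
  shows "Ebr sc G (ad \<omega> x, x) (ad \<omega> y, y) = (ad \<omega> (\<omega> x y), \<omega> x y)"
proof -
  have "(\<Sum>a\<in>UNIV. \<Sum>b\<in>UNIV. \<omega> (proj G a x) (\<omega> (proj G b y) v)
           - sgnsc sc a b (\<omega> (proj G b y) (\<omega> (proj G a x) v))) = \<omega> (\<omega> x y) v" for v
    by (simp add: super_Jacobi_apply[OF assms(2) proj_in proj_in] flip: L.sum add: omega_proj_sum)
  moreover have "(\<Sum>a\<in>UNIV. \<Sum>b\<in>UNIV. sc (inverse 2)
      (\<omega> (proj G a x) (proj G b y) - sgnsc sc a b (\<omega> (proj G b y) (proj G a x)))) = \<omega> x y"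
    by (simp only: sgnsc_swap[OF assms(1) proj_in proj_in] diff_minus_eq_add scale_half_double
        omega_proj_sum)
  ultimately show ?thesis unfolding Ebr_Fom by (simp add: ad_def)
qed

lemma super_Jacobi_if_Ebr_closed:
  assumes "super_skew_symmetric sc G \<omega>"
    and closed: "\<forall>e\<in>Fom \<omega>. \<forall>f\<in>Fom \<omega>. Ebr sc G e f \<in> Fom \<omega>"
  shows "super_Jacobi sc G \<omega>"
  unfolding super_Jacobi_def
proof (intro allI impI)
  fix a b c x y z assume hom: "x \<in> G a" "y \<in> G b"
  obtain u where u: "Ebr sc G (ad \<omega> x, x) (ad \<omega> y, y) = (ad \<omega> u, u)"
    using closed by (fastforce simp: Fom_def)
  then have "u = sc (inverse 2) (\<omega> x y - sgnsc sc a b (\<omega> y x))"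
    by (simp add: Ebr_Fom_homogeneous[OF hom])
  then have "u = \<omega> x y"
    by (simp only: sgnsc_swap[OF assms(1) hom] diff_minus_eq_add scale_half_double)
  with u have "\<omega> x (\<omega> y z) - sgnsc sc a b (\<omega> y (\<omega> x z)) = \<omega> (\<omega> x y) z"
    unfolding Ebr_Fom_homogeneous[OF hom] by (simp add: ad_def fun_eq_iff)
  then show "\<omega> x (\<omega> y z) = \<omega> (\<omega> x y) z + sgnsc sc a b (\<omega> y (\<omega> x z))"
    by (simp add: algebra_simps)
qed

lemma Ebr_closed_iff_super_Jacobi:
  assumes "super_skew_symmetric sc G \<omega>"
  shows "(\<forall>e\<in>Fom \<omega>. \<forall>f\<in>Fom \<omega>. Ebr sc G e f \<in> Fom \<omega>) \<longleftrightarrow> super_Jacobi sc G \<omega>"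
  using assms super_Jacobi_if_Ebr_closed Ebr_Fom_eq by (fastforce simp: Fom_def)

end

theorem mainTheorem3:
  fixes sc :: "'k::field_char_0 \<Rightarrow> 'v::ab_group_add \<Rightarrow> 'v"
    and G :: "bool \<Rightarrow> 'v set"
    and \<omega> :: "'v \<Rightarrow> 'v \<Rightarrow> 'v"
  assumes "fd_super_vector_space sc G"
    and "bilinear_map sc \<omega>"
    and "graded_map G \<omega>"
  shows "lie_superalgebra sc G \<omega> \<longleftrightarrow>
           (Fom \<omega> = Eperp sc G (Fom \<omega>) \<and>
            (\<forall>e\<in>Fom \<omega>. \<forall>f\<in>Fom \<omega>. Ebr sc G e f \<in> Fom \<omega>))"
proof -
  interpret graded_bilinear sc G \<omega>
    using assms by unfold_locales
  show ?thesis
    using assms Fom_eq_Eperp_iff Ebr_closed_iff_super_Jacobi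
    by (auto simp: lie_superalgebra_iff)
qed

end
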